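(* Let $I$ and $J$ be compositions of $n$, and let $M(I,J)$ be the set of matrices $M$ with nonnegative integer entries and no zero row such that $\mathrm{WC}(w(M))=I$ and the vector of column sums of $M$ is $J$. Then the coefficient $C_I^J(q)$ of $\Psi_I$ in $S^J(q)$ is \[ C_I^J(q)=\sum_{M\in M(I,J)}q^{\mathrm{sinv}(w(M))}. \]
   Context: For a nonnegative integer matrix $M=(m_{ij})$, $w(M)$ is the word obtained by reading the entries columnwise (columns left to right, each column top to bottom) and writing the row index $i$ repeated $m_{ij}$ times for each entry $m_{ij}$. A composition of $n$ is a sequence of positive integers with sum $n$. Over $\mathbb K(q)$ ($\mathrm{char}\,\mathbb K=0$): packed words are words with letter set $\{1,\dots,m\}$ for some $m$; $\mathrm{pack}$ replaces the $t$-th smallest letter by $t$. For a packed word $w=w_1\cdots w_n$: $\mathrm{WC}(w)$ is the composition of $n$ whose descent set (partial sums other than $n$) is the set of positions $p<n$ with $w_p$ not occurring in $w_{p+1}\cdots w_n$; $\mathrm{sinv}(w)=\#\{i<j:w_i>w_j,\ w_j\text{ not occurring in }w_{j+1}\cdots w_n\}$. $\mathbf{WQSym}$ has basis $\mathbf M_u$ with $\mathbf M_{u'}\mathbf M_{u''}=\sum\mathbf M_u$ over packed $u=v\cdot w$ with $\mathrm{pack}(v)=u'$, $\mathrm{pack}(w)=u''$; $\mathbf M_{u'}\star_q\mathbf M_{u''}=\sum q^{\mathrm{sinv}(u)-\mathrm{sinv}(u')-\mathrm{sinv}(u'')}\mathbf M_u$ (associative). $\mathbf{Sym}$ is the quotient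 by the span of $\mathbf M_u-\mathbf M_v$ with $\mathrm{WC}(u)=\mathrm{WC}(v)$, $\zeta$ the quotient map, $\Psi_I=\zeta(\mathbf M_u)$ for $\mathrm{WC}(u)=I$ (a basis). $\tilde S_m=\sum\mathbf M_u$ over nondecreasing packed $u$ of length $m$; for $J=(j_1,\dots,j_l)$, $S^J(q)=\zeta(\tilde S_{j_1}\star_q\cdots\star_q\tilde S_{j_l})$. *)

theory Defs
  imports Main "HOL-Computational_Algebra.Polynomial" "HOL-Computational_Algebra.Fraction_Field"
begin

(* Words are nat lists; positions 0-based internally. *)

definition is_composition :: "nat \<Rightarrow> nat list \<Rightarrow> bool" where
  "is_composition n I \<longleftrightarrow> (\<forall>x\<in>set I. 0 < x) \<and> sum_list I = n"

definition packed :: "nat list \<Rightarrow> bool" where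
  "packed w \<longleftrightarrow> set w = {1..card (set w)}"

definition pack :: "nat list \<Rightarrow> nat list" where
  "pack w = map (\<lambda>x. card {y \<in> set w. y \<le> x}) w"

(* composition of n with given descent set D \<subseteq> {1..n-1} *)
definition comp_of_descents :: "nat \<Rightarrow> nat set \<Rightarrow> nat list" where
  "comp_of_descents n D = (if n = 0 then [] else
     (let ps = sorted_list_of_set (insert n D) in map2 (-) ps (0 # ps)))"

(* descent set of WC(w): 1-based positions p<n with w_p not occurring in w_{p+1}...w_n *)
definition WC_descents :: "nat list \<Rightarrow> nat set" where
  "WC_descents w = {p. 1 \<le> p \<and> p < length w \<and> w ! (p - 1) \<notin> set (drop p w)}"

definition WC :: "nat list \<Rightarrow> nat list" where
  "WC w = comp_of_descents (length w) (WC_descents w)"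

definition sinv :: "nat list \<Rightarrow> nat" where
  "sinv w = card {(i, j). i < j \<and> j < length w \<and> w ! i > w ! j \<and> w ! j \<notin> set (drop (Suc j) w)}"

(* Elements of WQSym: coefficient functions on packed words, F u = coefficient of M_u *)
type_synonym 'f wqsym = "nat list \<Rightarrow> 'f"

definition wq_unit :: "'f::field wqsym" where
  "wq_unit u = (if u = [] then 1 else 0)"

(* bilinear extension of M_u' \<star>_q M_u'' *)
definition qprod :: "'f::field \<Rightarrow> 'f wqsym \<Rightarrow> 'f wqsym \<Rightarrow> 'f wqsym" where
  "qprod q F G u = (if packed u then
     (\<Sum>k\<in>{0..length u}. F (pack (take k u)) * G (pack (drop k u)) *
        q powi (int (sinv u) - int (sinv (pack (take k u))) - int (sinv (pack (drop k u)))))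
   else 0)"

definition Stilde :: "nat \<Rightarrow> 'f::field wqsym" where
  "Stilde m u = (if packed u \<and> length u = m \<and> sorted u then 1 else 0)"

definition Sprod :: "'f::field \<Rightarrow> nat list \<Rightarrow> 'f wqsym" where
  "Sprod q J = foldr (\<lambda>j acc. qprod q (Stilde j) acc) J wq_unit"

(* zeta : WQSym \<rightarrow> Sym, with Sym elements given by their coordinates in the basis Psi_I:
   zeta(M_u) = Psi_{WC(u)} *)
definition zeta :: "'f::field wqsym \<Rightarrow> nat list \<Rightarrow> 'f" where
  "zeta F I = (\<Sum>u\<in>{u. packed u \<and> length u = sum_list I \<and> WC u = I}. F u)"

(* S^J(q), as coordinates in the Psi basis: SJ q J I = C_I^J(q) *)
definition SJ :: "'f::field \<Rightarrow> nat list \<Rightarrow> nat list \<Rightarrow> 'f" where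
  "SJ q J = zeta (Sprod q J)"

definition qX :: "'k::field poly fract" where
  "qX = Fract [:0, 1:] 1"

(* matrices as lists of rows, each of length l (number of columns);
   w(M): columns left to right, each column top to bottom, row index i (1-based) repeated m_ij times *)
definition word_of_matrix :: "nat \<Rightarrow> nat list list \<Rightarrow> nat list" where
  "word_of_matrix l M = concat (map (\<lambda>j. concat (map (\<lambda>i. replicate (M ! i ! j) (Suc i)) [0..<length M])) [0..<l])"

definition matrix_set :: "nat list \<Rightarrow> nat list \<Rightarrow> nat list list set" where
  "matrix_set I J = {M. (\<forall>row\<in>set M. length row = length J \<and> (\<exists>x\<in>set row. x \<noteq> 0))
      \<and> (\<forall>j<length J. (\<Sum>i<length M. M ! i ! j) = J ! j)
      \<and> WC (word_of_matrix (length J) M) = I}"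

end

theory Submission
  imports Defs "HOL-Library.Multiset"
begin

(* Expanding the q-products, \<tilde>S_{j_1} \<star>_q ... \<star>_q \<tilde>S_{j_l} is the sum of q^sinv(u) M_u over the
   packed words u that split into consecutive nondecreasing factors of lengths j_1, ..., j_l:
   a nondecreasing factor has no s-inversions, so the exponents telescope. Such a word is the
   reading word w(M) of exactly one matrix M without zero rows, namely the one whose j-th column
   lists the letter multiplicities of the j-th factor; its column sums are then J. Applying
   \<zeta> keeps the words with WC(u) = I. *)

lemma sorted_map_strict_mono_on:
  fixes f :: "'a::linorder \<Rightarrow> 'b::linorder"
  assumes "strict_mono_on (set xs) f"
  shows "sorted (map f xs) \<longleftrightarrow> sorted xs"
proof -
  have "f x \<le> f y \<longleftrightarrow> x \<le> y" if "x \<in> set xs" "y \<in> set xs" for x y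
    using strict_mono_on_less_eq[OF assms that] .
  then show ?thesis
    unfolding sorted_map by (metis (no_types, lifting) sorted_wrt_mono_rel)
qed

definition rank :: "nat list \<Rightarrow> nat \<Rightarrow> nat" where
  "rank v x = card {y \<in> set v. y \<le> x}"

lemma pack_eq_map_rank: "pack v = map (rank v) v"
  by (simp add: pack_def rank_def)

lemma strict_mono_on_rank: "strict_mono_on (set v) (rank v)"
proof (rule strict_mono_onI)
  fix x y assume "x \<in> set v" "y \<in> set v" "x < y"
  then have "{z \<in> set v. z \<le> x} \<subset> {z \<in> set v. z \<le> y}"
    by (auto intro!: psubsetI dest: leD)
  then show "rank v x < rank v y" unfolding rank_def by (simp add: psubset_card_mono)
qed

lemma length_pack [simp]: "length (pack v) = length v"
  by (simp add: pack_def)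

lemma sorted_pack_iff: "sorted (pack v) \<longleftrightarrow> sorted v"
  unfolding pack_eq_map_rank by (rule sorted_map_strict_mono_on[OF strict_mono_on_rank])

lemma packed_pack: "packed (pack v)"
proof -
  have inj: "inj_on (rank v) (set v)"
    using strict_mono_on_rank by (rule strict_mono_on_imp_inj_on)
  have "rank v ` set v \<subseteq> {1..card (set v)}"
    by (auto simp: rank_def Suc_le_eq card_gt_0_iff intro!: card_mono)
  moreover have "card (rank v ` set v) = card (set v)"
    using inj by (rule card_image)
  ultimately have "rank v ` set v = {1..card (set v)}"
    by (intro card_subset_eq) auto
  then show ?thesis
    unfolding packed_def pack_eq_map_rank using inj by (simp add: card_image)
qed

lemma sinv_sorted:
  assumes "sorted w"
  shows "sinv w = 0"
proof -
  have "{(i, j). i < j \<and> j < length w \<and> w ! i > w ! j \<and> w ! j \<notin> set (drop (Suc j) w)} = {}"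
    using assms by (auto simp: sorted_iff_nth_mono leD)
  then show ?thesis unfolding sinv_def by (metis card.empty)
qed

fun sorted_segments :: "nat list \<Rightarrow> nat list \<Rightarrow> bool" where
  "sorted_segments [] u \<longleftrightarrow> u = []"
| "sorted_segments (j # J) u \<longleftrightarrow> j \<le> length u \<and> sorted (take j u) \<and> sorted_segments J (drop j u)"

fun segments :: "nat list \<Rightarrow> nat list \<Rightarrow> nat list list" where
  "segments [] u = []"
| "segments (j # J) u = take j u # segments J (drop j u)"

lemma length_if_sorted_segments: "sorted_segments J u \<Longrightarrow> length u = sum_list J"
  by (induction J arbitrary: u) force+

lemma sorted_segments_map_strict_mono_on:
  assumes "strict_mono_on (set u) f"
  shows "sorted_segments J (map f u) \<longleftrightarrow> sorted_segments J u"
  using assms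
proof (induction J arbitrary: u)
  case (Cons j J)
  have take: "strict_mono_on (set (take j u)) f" and drop: "strict_mono_on (set (drop j u)) f"
    using Cons.prems by (meson monotone_on_subset set_take_subset set_drop_subset)+
  show ?case
    using sorted_map_strict_mono_on[OF take] Cons.IH[OF drop] by (simp add: take_map drop_map)
qed simp

lemma sorted_segments_pack: "sorted_segments J (pack u) \<longleftrightarrow> sorted_segments J u"
  unfolding pack_eq_map_rank by (rule sorted_segments_map_strict_mono_on[OF strict_mono_on_rank])

lemma sorted_segments_concat_segments:
  assumes "sorted_segments J u"
  shows "concat (segments J u) = u" and "map length (segments J u) = J"
    and "\<forall>c\<in>set (segments J u). sorted c"
  using assms by (induction J arbitrary: u) auto

lemma sorted_segments_concat:
  assumes "map length cs = J" and "\<forall>c\<in>set cs. sorted c"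
  shows "sorted_segments J (concat cs)" and "segments J (concat cs) = cs"
  using assms by (induction J arbitrary: cs) (auto simp: Cons_eq_map_conv)

lemma Stilde_pack: "Stilde j (pack v) = (if length v = j \<and> sorted v then 1 else 0)"
  by (simp add: Stilde_def packed_pack sorted_pack_iff)

(* Only the cut at position j survives, and its sorted left factor has no s-inversions. *)
lemma qprod_Stilde:
  "qprod q (Stilde j) G u =
     (if packed u \<and> j \<le> length u \<and> sorted (take j u)
      then G (pack (drop j u)) * q powi (int (sinv u) - int (sinv (pack (drop j u))))
      else 0)"
proof -
  let ?T = "\<lambda>k. Stilde j (pack (take k u)) * G (pack (drop k u)) *
    q powi (int (sinv u) - int (sinv (pack (take k u))) - int (sinv (pack (drop k u))))"
  have only_j: "?T k = 0" if "k \<noteq> j" "k \<le> length u" for k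
    using that by (simp add: Stilde_pack)
  show ?thesis
  proof (cases "packed u \<and> j \<le> length u")
    case True
    then have "(\<Sum>k\<in>{0..length u}. ?T k) = ?T j"
      by (subst sum.remove[of _ j]) (auto intro!: sum.neutral only_j)
    then have "qprod q (Stilde j) G u = ?T j"
      using True unfolding qprod_def by simp
    then show ?thesis
      using True by (simp add: Stilde_pack sinv_sorted sorted_pack_iff)
  next
    case False
    then show ?thesis unfolding qprod_def using only_j by (auto intro!: sum.neutral)
  qed
qed

lemma Sprod_eq:
  fixes q :: "'f::field"
  assumes "q \<noteq> 0"
  shows "Sprod q J u = (if packed u \<and> sorted_segments J u then q ^ sinv u else 0)"
proof (induction J arbitrary: u)
  case Nil
  show ?case by (auto simp: Sprod_def wq_unit_def packed_def sinv_def)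
next
  case (Cons j J)
  have "q ^ a * q powi (int s - int a) = q ^ s" for a s
    using assms by (simp add: power_int_diff)
  then show ?case
    using Cons.IH by (simp add: Sprod_def qprod_Stilde packed_pack sorted_segments_pack)
qed

definition counts_word :: "(nat \<Rightarrow> nat) \<Rightarrow> nat \<Rightarrow> nat list" where
  "counts_word g r = concat (map (\<lambda>i. replicate (g i) (Suc i)) [0..<r])"

lemma counts_word_0 [simp]: "counts_word g 0 = []"
  and counts_word_Suc [simp]: "counts_word g (Suc r) = counts_word g r @ replicate (g r) (Suc r)"
  by (simp_all add: counts_word_def)

lemma count_counts_word:
  "count (mset (counts_word g r)) x = (if 1 \<le> x \<and> x \<le> r then g (x - 1) else 0)"
  by (induction r) auto

lemma set_counts_word: "x \<in> set (counts_word g r) \<longleftrightarrow> 1 \<le> x \<and> x \<le> r \<and> g (x - 1) \<noteq> 0"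
  by (metis count_counts_word count_mset_0_iff)

lemma sorted_counts_word: "sorted (counts_word g r)"
  by (induction r) (auto simp: sorted_append set_counts_word)

lemma length_counts_word: "length (counts_word g r) = (\<Sum>i<r. g i)"
  by (induction r) simp_all

lemma counts_word_cong: "(\<And>i. i < r \<Longrightarrow> g i = h i) \<Longrightarrow> counts_word g r = counts_word h r"
  by (induction r) auto

lemma counts_word_count:
  assumes "sorted b" and "set b \<subseteq> {1..r}"
  shows "counts_word (\<lambda>i. count (mset b) (Suc i)) r = b"
proof -
  have "mset (counts_word (\<lambda>i. count (mset b) (Suc i)) r) = mset b"
  proof (rule multiset_eqI)
    fix x
    show "count (mset (counts_word (\<lambda>i. count (mset b) (Suc i)) r)) x = count (mset b) x"
      using assms(2) by (cases "1 \<le> x \<and> x \<le> r") (auto simp: count_counts_word)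
  qed
  then show ?thesis
    by (metis assms(1) properties_for_sort sorted_counts_word sorted_sort_id)
qed

definition column :: "nat list list \<Rightarrow> nat \<Rightarrow> nat list" where
  "column M j = counts_word (\<lambda>i. M ! i ! j) (length M)"

lemma word_of_matrix_eq_concat_columns: "word_of_matrix l M = concat (map (column M) [0..<l])"
  by (simp add: word_of_matrix_def column_def[abs_def] counts_word_def)

lemma length_column: "length (column M j) = (\<Sum>i<length M. M ! i ! j)"
  by (simp add: column_def length_counts_word)

lemma word_of_matrix_segments:
  assumes "M \<in> matrix_set I J"
  shows "sorted_segments J (word_of_matrix (length J) M)"
    and "segments J (word_of_matrix (length J) M) = map (column M) [0..<length J]"
proof -
  have "map length (map (column M) [0..<length J]) = map ((!) J) [0..<length J]"
    using assms by (simp add: matrix_set_def length_column)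
  then have "map length (map (column M) [0..<length J]) = J"
    by (simp add: map_nth)
  moreover have "\<forall>c\<in>set (map (column M) [0..<length J]). sorted c"
    by (simp add: column_def sorted_counts_word)
  ultimately show "sorted_segments J (word_of_matrix (length J) M)"
    and "segments J (word_of_matrix (length J) M) = map (column M) [0..<length J]"
    unfolding word_of_matrix_eq_concat_columns by (rule sorted_segments_concat)+
qed

lemma set_word_of_matrix:
  assumes "M \<in> matrix_set I J"
  shows "set (word_of_matrix (length J) M) = {1..length M}"
proof (intro equalityI subsetI)
  fix x assume "x \<in> set (word_of_matrix (length J) M)"
  then show "x \<in> {1..length M}"
    by (auto simp: word_of_matrix_eq_concat_columns column_def set_counts_word)
next
  fix x assume x: "x \<in> {1..length M}"
  then have "M ! (x - 1) \<in> set M" by auto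
  then have "length (M ! (x - 1)) = length J" and "\<exists>y\<in>set (M ! (x - 1)). y \<noteq> 0"
    using assms by (auto simp: matrix_set_def)
  then obtain j where "j < length J" and "M ! (x - 1) ! j \<noteq> 0"
    by (auto simp: in_set_conv_nth)
  then show "x \<in> set (word_of_matrix (length J) M)"
    using x by (auto simp: word_of_matrix_eq_concat_columns column_def set_counts_word)
qed

lemma count_column: "i < length M \<Longrightarrow> count (mset (column M j)) (Suc i) = M ! i ! j"
  by (simp add: column_def count_counts_word)

lemma inj_on_word_of_matrix: "inj_on (word_of_matrix (length J)) (matrix_set I J)"
proof (rule inj_onI)
  fix M M' assume M: "M \<in> matrix_set I J" and M': "M' \<in> matrix_set I J"
    and eq: "word_of_matrix (length J) M = word_of_matrix (length J) M'"
  have "map (column M) [0..<length J] = map (column M') [0..<length J]"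
    using word_of_matrix_segments(2)[OF M] word_of_matrix_segments(2)[OF M'] eq by metis
  then have columns: "column M j = column M' j" if "j < length J" for j
    using that by simp
  have rows: "length M = length M'"
    using set_word_of_matrix[OF M] set_word_of_matrix[OF M'] eq
    by (metis card_atLeastAtMost diff_Suc_1)
  have "length (M ! i) = length J" "length (M' ! i) = length J" if "i < length M" for i
    using that rows M M' by (auto simp: matrix_set_def)
  then show "M = M'"
    using rows count_column[of _ M] count_column[of _ M'] columns
    by (metis nth_equalityI)
qed

definition matrix_of_segments :: "nat \<Rightarrow> nat list list \<Rightarrow> nat list list" where
  "matrix_of_segments r bs = map (\<lambda>i. map (\<lambda>b. count (mset b) (Suc i)) bs) [0..<r]"

lemma column_matrix_of_segments:
  assumes "j < length bs" and "sorted (bs ! j)" and "set (bs ! j) \<subseteq> {1..r}"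
  shows "column (matrix_of_segments r bs) j = bs ! j"
proof -
  have "column (matrix_of_segments r bs) j = counts_word (\<lambda>i. matrix_of_segments r bs ! i ! j) r"
    by (simp add: column_def matrix_of_segments_def)
  also have "\<dots> = counts_word (\<lambda>i. count (mset (bs ! j)) (Suc i)) r"
    using assms(1) by (intro counts_word_cong) (simp add: matrix_of_segments_def)
  finally show ?thesis
    using assms(2,3) by (simp add: counts_word_count)
qed

lemma word_of_matrix_of_segments:
  assumes "\<forall>b\<in>set bs. sorted b \<and> set b \<subseteq> {1..r}"
  shows "word_of_matrix (length bs) (matrix_of_segments r bs) = concat bs"
proof -
  have "map (column (matrix_of_segments r bs)) [0..<length bs] = map ((!) bs) [0..<length bs]"
    using assms by (simp add: column_matrix_of_segments)
  then show ?thesis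
    by (simp add: word_of_matrix_eq_concat_columns map_nth)
qed

definition WC_segment_words :: "nat list \<Rightarrow> nat list \<Rightarrow> nat list set" where
  "WC_segment_words I J = {u. packed u \<and> length u = sum_list I \<and> WC u = I \<and> sorted_segments J u}"

lemma word_of_matrix_in_WC_segment_words:
  assumes "M \<in> matrix_set I J" and "sum_list I = sum_list J"
  shows "word_of_matrix (length J) M \<in> WC_segment_words I J"
  using assms word_of_matrix_segments(1)[OF assms(1)] set_word_of_matrix[OF assms(1)]
  by (auto simp: WC_segment_words_def packed_def matrix_set_def length_if_sorted_segments)

lemma WC_segment_word_of_matrix:
  assumes u: "u \<in> WC_segment_words I J"
  obtains M where "M \<in> matrix_set I J" and "word_of_matrix (length J) M = u"
proof
  have "packed u" and "WC u = I" and segs: "sorted_segments J u"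
    using u by (auto simp: WC_segment_words_def)
  define r where "r = card (set u)"
  define bs where "bs = segments J u"
  have letters: "set u = {1..r}"
    using \<open>packed u\<close> by (simp add: packed_def r_def)
  have u_eq: "concat bs = u" and lengths: "map length bs = J" and sorted: "\<forall>b\<in>set bs. sorted b"
    using sorted_segments_concat_segments[OF segs] by (simp_all add: bs_def)
  have bs_letters: "\<forall>b\<in>set bs. sorted b \<and> set b \<subseteq> {1..r}"
    using sorted letters u_eq by auto
  define M where "M = matrix_of_segments r bs"
  show word: "word_of_matrix (length J) M = u"
    using word_of_matrix_of_segments[OF bs_letters] lengths u_eq by (auto simp: M_def)
  show "M \<in> matrix_set I J"
    unfolding matrix_set_def
  proof (intro CollectI conjI ballI allI impI)
    fix row assume "row \<in> set M"
    then obtain i where i: "i < r" and row: "row = map (\<lambda>b. count (mset b) (Suc i)) bs"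
      by (auto simp: M_def matrix_of_segments_def)
    show "length row = length J"
      using row lengths by auto
    have "Suc i \<in> set (concat bs)"
      using i letters u_eq by auto
    then obtain b where "b \<in> set bs" and "Suc i \<in> set b"
      by auto
    then show "\<exists>x\<in>set row. x \<noteq> 0"
      using row by force
  next
    fix j assume "j < length J"
    then have "j < length bs" and "bs ! j \<in> set bs"
      using lengths by auto
    then have "column M j = bs ! j"
      using bs_letters unfolding M_def by (blast intro: column_matrix_of_segments)
    then show "(\<Sum>i<length M. M ! i ! j) = J ! j"
      using \<open>j < length J\<close> lengths by (auto simp flip: length_column)
  next
    show "WC (word_of_matrix (length J) M) = I"
      using word \<open>WC u = I\<close> by simp
  qed
qed

lemma bij_betw_word_of_matrix:
  assumes "sum_list I = sum_list J"
  shows "bij_betw (word_of_matrix (length J)) (matrix_set I J) (WC_segment_words I J)"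
proof (rule bij_betw_imageI)
  show "inj_on (word_of_matrix (length J)) (matrix_set I J)"
    by (rule inj_on_word_of_matrix)
  show "word_of_matrix (length J) ` matrix_set I J = WC_segment_words I J"
  proof
    show "word_of_matrix (length J) ` matrix_set I J \<subseteq> WC_segment_words I J"
      using word_of_matrix_in_WC_segment_words[OF _ assms] by blast
    show "WC_segment_words I J \<subseteq> word_of_matrix (length J) ` matrix_set I J"
    proof
      fix u assume "u \<in> WC_segment_words I J"
      then obtain M where "M \<in> matrix_set I J" and "word_of_matrix (length J) M = u"
        by (rule WC_segment_word_of_matrix)
      then show "u \<in> word_of_matrix (length J) ` matrix_set I J" by blast
    qed
  qed
qed

lemma finite_packed_words: "finite {u. packed u \<and> length u = n \<and> P u}"
proof (rule finite_subset)
  show "{u. packed u \<and> length u = n \<and> P u} \<subseteq> {u. set u \<subseteq> {0..n} \<and> length u = n}"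
  proof
    fix u assume u: "u \<in> {u. packed u \<and> length u = n \<and> P u}"
    then have letters: "set u = {1..card (set u)}"
      by (simp add: packed_def)
    have "{1..card (set u)} \<subseteq> {0..n}"
      using u card_length[of u] by auto
    with letters have "set u \<subseteq> {0..n}" by (rule ord_eq_le_trans)
    then show "u \<in> {u. set u \<subseteq> {0..n} \<and> length u = n}" using u by simp
  qed
  show "finite {u. set u \<subseteq> {0..n} \<and> length u = n}"
    by (rule finite_lists_length_eq) simp
qed

lemma qX_nonzero: "qX \<noteq> 0"
  unfolding qX_def Zero_fract_def by (simp add: eq_fract)

theorem mainTheorem8:
  fixes n :: nat and I J :: "nat list"
  assumes "is_composition n I" and "is_composition n J"
  shows "SJ (qX :: 'k::field_char_0 poly fract) J I
         = (\<Sum>M\<in>matrix_set I J. qX ^ sinv (word_of_matrix (length J) M))"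
proof -
  have same_size: "sum_list I = sum_list J"
    using assms by (simp add: is_composition_def)
  let ?U = "{u. packed u \<and> length u = sum_list I \<and> WC u = I}"
  have "SJ (qX :: 'k poly fract) J I = (\<Sum>u\<in>?U. if sorted_segments J u then qX ^ sinv u else 0)"
    by (simp add: SJ_def zeta_def Sprod_eq[OF qX_nonzero])
  also have "\<dots> = (\<Sum>u\<in>WC_segment_words I J. qX ^ sinv u)"
    unfolding WC_segment_words_def
    by (simp add: sum.inter_filter[symmetric] finite_packed_words conj_assoc)
  also have "\<dots> = (\<Sum>M\<in>matrix_set I J. qX ^ sinv (word_of_matrix (length J) M))"
    by (rule sum.reindex_bij_betw[symmetric, OF bij_betw_word_of_matrix[OF same_size]])
  finally show ?thesis .
qed

end
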